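(* Let $m$ be an odd positive integer and $\ell=\lceil\log_2 m\rceil$. Suppose $m=2^Lh+1$ where $L\geq 3$ is an integer and $h$ is an odd positive integer. Then $\mathfrak K(m)<\left(1+\frac{2^{L+1}+4}{m}\right)2^\ell$.
   Context: The Thue–Morse word is $\mathbf t=\mathbf t_1\mathbf t_2\cdots$ where $\mathbf t_i\in\{0,1\}$ has the parity of the number of $1$'s in the binary expansion of $i-1$. For positive integers $\alpha\le\beta$, $\langle\alpha,\beta\rangle=\mathbf t_\alpha\cdots\mathbf t_\beta$. A $k$-anti-power is a word $w_1\cdots w_k$ with $w_1,\dots,w_k$ pairwise distinct words of equal length. For a positive integer $m$, $\mathfrak K(m)$ is the smallest positive integer $k$ such that the prefix $\langle 1,km\rangle$ of $\mathbf t$ is not a $k$-anti-power. *)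

theory Defs
  imports "HOL-Analysis.Analysis"
begin

fun popcount :: "nat \<Rightarrow> nat" where
  "popcount n = (if n = 0 then 0 else n mod 2 + popcount (n div 2))"

declare popcount.simps[simp del]

(* Thue-Morse word, 1-indexed: t i = parity of popcount (i-1), for i \<ge> 1 *)
definition tm :: "nat \<Rightarrow> nat" where
  "tm i = popcount (i - 1) mod 2"

definition factor :: "nat \<Rightarrow> nat \<Rightarrow> nat list" where
  "factor \<alpha> \<beta> = map tm [\<alpha>..<Suc \<beta>]"

definition prefix_anti_power :: "nat \<Rightarrow> nat \<Rightarrow> bool" where
  "prefix_anti_power k m \<longleftrightarrow>
     (\<forall>i\<in>{1..k}. \<forall>j\<in>{1..k}. i \<noteq> j \<longrightarrow>
        factor ((i-1)*m+1) (i*m) \<noteq> factor ((j-1)*m+1) (j*m))"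

definition KK :: "nat \<Rightarrow> nat" where
  "KK m = (LEAST k. 0 < k \<and> \<not> prefix_anti_power k m)"

end

theory Submission imports Defs begin

text \<open>
  Write \<open>P = 2^\<ell> \<ge> m\<close>. If \<open>q\<close> satisfies \<open>t(q) = t(q+m)\<close> and \<open>t(q+1) = t(q+1+m)\<close>
  (for the Thue--Morse parity \<open>t\<close>), then every position \<open>P q + s\<close> with \<open>s < 2P\<close> has the
  same parity as \<open>P (q+m) + s\<close>, since adding \<open>P m\<close> only changes the high digits \<open>q\<close> or
  \<open>q+1\<close>. Taking the block \<open>x\<close> of length \<open>m\<close> that starts in the window \<open>[P q, P q + m)\<close>,
  the blocks \<open>x\<close> and \<open>x + P\<close> are equal, so \<open>\<frak>K(m) \<le> x + 1 + P < (q+2)P/m + P\<close>. For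
  \<open>m = 2^L h + 1\<close> the choice \<open>q = 2^L c + 2\<close> with \<open>c \<in> {1,2}\<close> and \<open>popcount (h+c)\<close> even
  works, giving \<open>q + 2 \<le> 2^(L+1) + 4\<close>.
\<close>

lemma popcount_eq: "popcount n = n mod 2 + popcount (n div 2)"
  by (cases "n = 0") (simp_all add: popcount.simps)

lemma popcount_0 [simp]: "popcount 0 = 0"
  by (subst popcount.simps) simp

lemma popcount_1 [simp]: "popcount (Suc 0) = 1"
  by (subst popcount_eq) simp

lemma popcount_2 [simp]: "popcount 2 = 1"
  by (subst popcount_eq) simp

lemma popcount_3 [simp]: "popcount 3 = 2"
  by (subst popcount_eq) simp

lemma popcount_4 [simp]: "popcount 4 = 1"
  by (subst popcount_eq) simp

lemma popcount_Suc_even: "even n \<Longrightarrow> popcount (Suc n) = Suc (popcount n)"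
  by (subst (1 2) popcount_eq) (simp add: even_iff_mod_2_eq_zero mod_Suc)

lemma popcount_mult_pow2_add:
  "b < 2 ^ k \<Longrightarrow> popcount (2 ^ k * a + b) = popcount a + popcount b"
proof (induction k arbitrary: b)
  case 0
  then show ?case by simp
next
  case (Suc k)
  have "(2 ^ Suc k * a + b) mod 2 = b mod 2"
    by (simp add: mod_add_left_eq[symmetric])
  moreover have "(2 ^ Suc k * a + b) div 2 = 2 ^ k * a + b div 2"
    by simp
  moreover have "popcount (2 ^ k * a + b div 2) = popcount a + popcount (b div 2)"
    using Suc by (intro Suc.IH) simp
  ultimately show ?case
    by (subst (1 2) popcount_eq) simp
qed

lemma popcount_parity_shift:
  assumes "s < 2 * 2 ^ l"
    and "popcount q mod 2 = popcount (q + d) mod 2"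
    and "popcount (q + 1) mod 2 = popcount (q + 1 + d) mod 2"
  shows "popcount (2 ^ l * q + s) mod 2 = popcount (2 ^ l * (q + d) + s) mod 2"
proof (cases "s < 2 ^ l")
  case True
  then have "popcount (2 ^ l * q + s) = popcount q + popcount s"
    and "popcount (2 ^ l * (q + d) + s) = popcount (q + d) + popcount s"
    by (simp_all add: popcount_mult_pow2_add)
  then show ?thesis
    using assms(2) by (metis mod_add_cong)
next
  case False
  define s' where "s' = s - 2 ^ l"
  have "s' < 2 ^ l" "s = 2 ^ l + s'"
    using False assms(1) by (simp_all add: s'_def)
  then have "2 ^ l * q + s = 2 ^ l * (q + 1) + s'"
    and "2 ^ l * (q + d) + s = 2 ^ l * (q + 1 + d) + s'"
    by (simp_all add: algebra_simps)
  with \<open>s' < 2 ^ l\<close> have "popcount (2 ^ l * q + s) = popcount (q + 1) + popcount s'"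
    and "popcount (2 ^ l * (q + d) + s) = popcount (q + 1 + d) + popcount s'"
    by (simp_all only: popcount_mult_pow2_add)
  then show ?thesis
    using assms(3) by (metis mod_add_cong)
qed

lemma factor_block: "factor (a + 1) (a + n) = map (\<lambda>r. popcount (a + r) mod 2) [0..<n]"
  unfolding factor_def by (rule nth_equalityI) (simp_all add: tm_def del: upt_Suc)

lemma KK_le_if_equal_blocks:
  assumes "0 < i" "i < j"
    and "factor ((i - 1) * m + 1) (i * m) = factor ((j - 1) * m + 1) (j * m)"
  shows "KK m \<le> j"
proof -
  have "\<not> prefix_anti_power j m"
    using assms unfolding prefix_anti_power_def by force
  then show ?thesis
    unfolding KK_def using assms(2) by (intro Least_le) simp
qed

lemma exists_mult_in_window:
  assumes "0 < (m :: nat)"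
  obtains x where "n \<le> x * m" "x * m < n + m"
proof
  let ?x = "(n + m - 1) div m"
  have "?x * m + (n + m - 1) mod m = n + m - 1" "(n + m - 1) mod m < m"
    using assms by simp_all
  then show "n \<le> ?x * m" "?x * m < n + m"
    by linarith+
qed

lemma thue_morse_blocks_periodic:
  assumes "m \<le> 2 ^ l"
    and "2 ^ l * q \<le> x * m" "x * m < 2 ^ l * q + m"
    and "popcount q mod 2 = popcount (q + m) mod 2"
    and "popcount (q + 1) mod 2 = popcount (q + 1 + m) mod 2"
  shows "factor (x * m + 1) (x * m + m) = factor ((x + 2 ^ l) * m + 1) ((x + 2 ^ l) * m + m)"
  unfolding factor_block
proof (rule map_cong[OF refl])
  fix r assume "r \<in> set [0..<m]"
  define s where "s = x * m - 2 ^ l * q + r"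
  have "s < 2 * 2 ^ l"
    using \<open>r \<in> set [0..<m]\<close> assms(1,3) by (simp add: s_def)
  moreover have "x * m + r = 2 ^ l * q + s"
    and "(x + 2 ^ l) * m + r = 2 ^ l * (q + m) + s"
    using assms(2) by (simp_all add: s_def algebra_simps)
  ultimately show "popcount (x * m + r) mod 2 = popcount ((x + 2 ^ l) * m + r) mod 2"
    using popcount_parity_shift assms(4,5) by simp
qed

lemma KK_less_if_parities_agree:
  assumes "0 < m" "m \<le> 2 ^ l"
    and "popcount q mod 2 = popcount (q + m) mod 2"
    and "popcount (q + 1) mod 2 = popcount (q + 1 + m) mod 2"
  shows "real (KK m) < real (q + 2) * 2 ^ l / real m + 2 ^ l"
proof -
  obtain x where x: "2 ^ l * q \<le> x * m" "x * m < 2 ^ l * q + m"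
    using exists_mult_in_window[OF \<open>0 < m\<close>] .
  have "factor ((Suc x - 1) * m + 1) (Suc x * m)
      = factor ((Suc x + 2 ^ l - 1) * m + 1) ((Suc x + 2 ^ l) * m)"
    using thue_morse_blocks_periodic[OF assms(2) x assms(3,4)] by (simp add: algebra_simps)
  then have "KK m \<le> Suc x + 2 ^ l"
    by (rule KK_le_if_equal_blocks[rotated 2]) simp_all
  then have "real (KK m) \<le> real (Suc x) + 2 ^ l"
    by (metis of_nat_add of_nat_le_iff of_nat_numeral of_nat_power)
  moreover have "Suc x * m < (q + 2) * 2 ^ l"
    using x assms(2) by (simp add: algebra_simps)
  then have "real (Suc x) * real m < real (q + 2) * 2 ^ l"
    by (metis of_nat_less_iff of_nat_mult of_nat_numeral of_nat_power)
  then have "real (Suc x) < real (q + 2) * 2 ^ l / real m"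
    using assms(1) by (simp add: pos_less_divide_eq)
  ultimately show ?thesis
    by linarith
qed

lemma exists_even_popcount_add:
  assumes "odd h"
  obtains c where "c = 1 \<or> c = 2" "even (popcount (h + c))"
proof (cases "even (popcount (h + 1))")
  case False
  then have "even (popcount (h + 2))"
    using popcount_Suc_even[of "h + 1"] assms by simp
  then show ?thesis using that by blast
qed (use that in blast)

theorem lemma8:
  fixes m h L :: nat
  assumes "odd m" and "m > 0"
    and "m = 2 ^ L * h + 1" and "L \<ge> 3" and "odd h" and "h > 0"
  shows "real (KK m) < (1 + (2 ^ (L+1) + 4) / real m) * 2 powr (of_int \<lceil>log 2 (real m)\<rceil>)"
proof -
  define l where "l = nat \<lceil>log 2 (real m)\<rceil>"
  have "log 2 (real m) \<ge> 0"
    using \<open>m > 0\<close> by simp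
  then have powr_l: "(2 :: real) powr (of_int \<lceil>log 2 (real m)\<rceil>) = 2 ^ l"
    unfolding l_def by (simp add: powr_int)
  have "real m = 2 powr log 2 (real m)"
    using \<open>m > 0\<close> by simp
  also have "\<dots> \<le> 2 ^ l"
    unfolding powr_l[symmetric] by simp
  finally have "m \<le> 2 ^ l"
    by (metis of_nat_le_iff of_nat_numeral of_nat_power)
  obtain c where c: "c = 1 \<or> c = 2" "even (popcount (h + c))"
    using exists_even_popcount_add[OF \<open>odd h\<close>] .
  define q where "q = 2 ^ L * c + 2"
  have "(4 :: nat) < 2 ^ L"
    using power_increasing[OF \<open>L \<ge> 3\<close>, of "2 :: nat"] by simp
  have "q + 1 = 2 ^ L * c + 3" "q + m = 2 ^ L * (h + c) + 3" "q + 1 + m = 2 ^ L * (h + c) + 4"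
    unfolding q_def assms(3) by (simp_all add: algebra_simps)
  then have "popcount q = popcount c + 1" "popcount (q + 1) = popcount c + 2"
    "popcount (q + m) = popcount (h + c) + 2" "popcount (q + 1 + m) = popcount (h + c) + 1"
    using \<open>4 < 2 ^ L\<close> unfolding q_def
    by (simp_all only: popcount_mult_pow2_add) simp_all
  moreover have "popcount c = 1"
    using c(1) by auto
  ultimately have "popcount q mod 2 = popcount (q + m) mod 2"
    "popcount (q + 1) mod 2 = popcount (q + 1 + m) mod 2"
    using c(2) by presburger+
  then have "real (KK m) < real (q + 2) * 2 ^ l / real m + 2 ^ l"
    by (rule KK_less_if_parities_agree[OF \<open>m > 0\<close> \<open>m \<le> 2 ^ l\<close>])
  also have "\<dots> \<le> (2 ^ (L + 1) + 4) * 2 ^ l / real m + 2 ^ l"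
    using c(1) by (intro add_right_mono divide_right_mono mult_right_mono) (auto simp: q_def)
  finally show ?thesis
    unfolding powr_l by (simp add: field_simps)
qed

end
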